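(* Let $G$ be a finite group, let $M$ be a subgroup of $G$, and let $K$ be a normal subgroup of $G$ contained in $M$. Suppose that $G$ is a split extension of $K$ by $G/K$ (that is, $K$ has a complement in $G$). Then $M$ is a perfect code of $G$ if and only if $M/K$ is a perfect code of $G/K$.
   Context: For a group $G$ with identity $e$ and an inverse-closed subset $S\subseteq G\setminus\{e\}$, the Cayley graph $\mathrm{Cay}(G,S)$ has vertex set $G$ and edges $\{g,sg\}$ for $s\in S$, $g\in G$. A perfect code in a graph is an independent set $C$ of vertices such that every vertex outside $C$ is adjacent to exactly one vertex of $C$. A subgroup $H$ of $G$ is a perfect code of $G$ if some Cayley graph of $G$ admits $H$ as a perfect code. *)

theory Defs
  imports "HOL-Algebra.Algebra"
begin

definition cayley_adj :: "('a, 'b) monoid_scheme \<Rightarrow> 'a set \<Rightarrow> 'a \<Rightarrow> 'a \<Rightarrow> bool" where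
  "cayley_adj G S x y \<longleftrightarrow> x \<in> carrier G \<and> y \<in> carrier G \<and>
     ((\<exists>s\<in>S. y = s \<otimes>\<^bsub>G\<^esub> x) \<or> (\<exists>s\<in>S. x = s \<otimes>\<^bsub>G\<^esub> y))"

definition cayley_connection_set :: "('a, 'b) monoid_scheme \<Rightarrow> 'a set \<Rightarrow> bool" where
  "cayley_connection_set G S \<longleftrightarrow> S \<subseteq> carrier G - {\<one>\<^bsub>G\<^esub>} \<and> (\<forall>s\<in>S. inv\<^bsub>G\<^esub> s \<in> S)"

definition perfect_code_in :: "('a, 'b) monoid_scheme \<Rightarrow> 'a set \<Rightarrow> 'a set \<Rightarrow> bool" where
  "perfect_code_in G S C \<longleftrightarrow> C \<subseteq> carrier G \<and>
     (\<forall>x\<in>C. \<forall>y\<in>C. \<not> cayley_adj G S x y) \<and>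
     (\<forall>x\<in>carrier G - C. \<exists>!c. c \<in> C \<and> cayley_adj G S x c)"

definition subgroup_perfect_code :: "'a set \<Rightarrow> ('a, 'b) monoid_scheme \<Rightarrow> bool" where
  "subgroup_perfect_code H G \<longleftrightarrow> subgroup H G \<and>
     (\<exists>S. cayley_connection_set G S \<and> perfect_code_in G S H)"

end

theory Submission
  imports Defs
begin

(* A subgroup H is a perfect code of Cay(G,S) exactly when S avoids H and meets every other
   left coset xH in exactly one element. Let h : G -> Q be a surjective homomorphism whose
   kernel lies in M. Left cosets of M are then the full preimages of left cosets of h M, so
   the image h S of a connection set for M is a connection set for h M. Conversely, a
   complement L of the kernel maps bijectively onto Q, so a connection set T for h M lifts to
   the connection set of those l in L with h l in T. *)

lemma bij_betw_Ex1_iff: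
  assumes "bij_betw f A B"
  shows "(\<exists>!a. a \<in> A \<and> P (f a)) \<longleftrightarrow> (\<exists>!b. b \<in> B \<and> P b)"
  using assms unfolding bij_betw_def inj_on_def by blast

lemma (in group) cayley_adj_iff:
  assumes "cayley_connection_set G S"
  shows "cayley_adj G S x y \<longleftrightarrow> x \<in> carrier G \<and> y \<in> carrier G \<and> x \<otimes> inv y \<in> S"
proof -
  have S: "S \<subseteq> carrier G" "\<And>s. s \<in> S \<Longrightarrow> inv s \<in> S"
    using assms unfolding cayley_connection_set_def by auto
  have solve: "(\<exists>s\<in>S. a = s \<otimes> b) \<longleftrightarrow> a \<otimes> inv b \<in> S"
    if a: "a \<in> carrier G" and b: "b \<in> carrier G" for a b
  proof -
    have "a = s \<otimes> b \<longleftrightarrow> s = a \<otimes> inv b" if "s \<in> S" for s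
      using inv_solve_right[of s a b] that S(1) a b by blast
    then show ?thesis
      by auto
  qed
  have swap: "y \<otimes> inv x \<in> S \<longleftrightarrow> x \<otimes> inv y \<in> S"
    if x: "x \<in> carrier G" and y: "y \<in> carrier G"
  proof -
    have "inv (x \<otimes> inv y) = y \<otimes> inv x" "inv (y \<otimes> inv x) = x \<otimes> inv y"
      using x y by (simp_all add: inv_mult_group)
    then show ?thesis
      using S(2) by metis
  qed
  show ?thesis
    unfolding cayley_adj_def using solve swap by blast
qed

(* The subscript on <# is explicit because the bare symbol also denotes the multiset order. *)
lemma (in group) bij_betw_lcos:
  assumes "subgroup H G" "x \<in> carrier G"
  shows "bij_betw (\<lambda>c. x \<otimes> inv c) H (x <#\<^bsub>G\<^esub> H)"
proof (rule bij_betw_imageI)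
  show "inj_on (\<lambda>c. x \<otimes> inv c) H"
    using assms by (intro inj_onI) (metis l_cancel inv_closed inv_inv subgroup.mem_carrier)
  show "(\<lambda>c. x \<otimes> inv c) ` H = x <#\<^bsub>G\<^esub> H"
  proof
    show "(\<lambda>c. x \<otimes> inv c) ` H \<subseteq> x <#\<^bsub>G\<^esub> H"
      using assms by (auto simp: l_coset_def intro: subgroup.m_inv_closed)
    show "x <#\<^bsub>G\<^esub> H \<subseteq> (\<lambda>c. x \<otimes> inv c) ` H"
      using assms by (auto simp: l_coset_def intro!: image_eqI[of _ _ "inv _"]
          subgroup.m_inv_closed dest: subgroup.mem_carrier)
  qed
qed

lemma (in group) perfect_code_in_subgroup_iff:
  assumes H: "subgroup H G" and S: "cayley_connection_set G S"
  shows "perfect_code_in G S H \<longleftrightarrow>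
    S \<inter> H = {} \<and> (\<forall>x \<in> carrier G - H. \<exists>!s. s \<in> S \<inter> (x <#\<^bsub>G\<^esub> H))"
proof -
  note adj = cayley_adj_iff[OF S]
  have HG: "H \<subseteq> carrier G"
    using H by (rule subgroup.subset)
  have "(\<forall>x\<in>H. \<forall>y\<in>H. \<not> cayley_adj G S x y) \<longleftrightarrow> S \<inter> H = {}"
  proof
    assume "\<forall>x\<in>H. \<forall>y\<in>H. \<not> cayley_adj G S x y"
    then have "\<not> cayley_adj G S s \<one>" if "s \<in> H" for s
      using that H subgroup.one_closed by blast
    then show "S \<inter> H = {}"
      using adj HG by auto
  qed (use adj H in \<open>auto intro: subgroup.m_closed subgroup.m_inv_closed\<close>)
  moreover have "(\<exists>!c. c \<in> H \<and> cayley_adj G S x c) \<longleftrightarrow> (\<exists>!s. s \<in> S \<inter> (x <#\<^bsub>G\<^esub> H))"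
    if x: "x \<in> carrier G" for x
  proof -
    have "(\<lambda>c. c \<in> H \<and> cayley_adj G S x c) = (\<lambda>c. c \<in> H \<and> x \<otimes> inv c \<in> S)"
      using adj HG x by auto
    then show ?thesis
      using bij_betw_Ex1_iff[OF bij_betw_lcos[OF H x], of "\<lambda>s. s \<in> S"] by auto
  qed
  ultimately show ?thesis
    unfolding perfect_code_in_def using HG by auto
qed

lemma (in group) mem_lcos_iff:
  assumes "subgroup N G" "x \<in> carrier G" "y \<in> carrier G"
  shows "y \<in> x <#\<^bsub>G\<^esub> N \<longleftrightarrow> inv x \<otimes> y \<in> N"
  using subgroup.lcos_module_imp[OF assms(1) is_group assms(2)]
    subgroup.lcos_module_rev[OF assms(1) is_group assms(2,3)] by (intro iffI)

lemma (in group_hom) hom_mem_image_iff: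
  assumes M: "subgroup M G" and ker: "kernel G H h \<subseteq> M" and x: "x \<in> carrier G"
  shows "h x \<in> h ` M \<longleftrightarrow> x \<in> M"
proof
  assume "h x \<in> h ` M"
  then obtain m where m: "m \<in> M" "h x = h m" by auto
  with M x have "x \<otimes> inv m \<in> kernel G H h"
    by (auto simp: kernel_def dest: subgroup.mem_carrier)
  with ker have "x \<otimes> inv m \<otimes> m \<in> M"
    using M m by (auto intro: subgroup.m_closed)
  with x m M show "x \<in> M"
    by (simp add: G.m_assoc subgroup.mem_carrier)
qed simp

lemma (in group_hom) hom_mem_lcos_image_iff:
  assumes M: "subgroup M G" and ker: "kernel G H h \<subseteq> M"
    and x: "x \<in> carrier G" and y: "y \<in> carrier G"
  shows "h y \<in> h x <#\<^bsub>H\<^esub> h ` M \<longleftrightarrow> y \<in> x <#\<^bsub>G\<^esub> M"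
proof -
  have "h y \<in> h x <#\<^bsub>H\<^esub> h ` M \<longleftrightarrow> h (inv x \<otimes> y) \<in> h ` M"
    using H.mem_lcos_iff[OF subgroup_img_is_subgroup[OF M]] x y by simp
  also have "\<dots> \<longleftrightarrow> inv x \<otimes> y \<in> M"
    using x y by (intro hom_mem_image_iff[OF M ker]) simp
  also have "\<dots> \<longleftrightarrow> y \<in> x <#\<^bsub>G\<^esub> M"
    using G.mem_lcos_iff[OF M x y] by simp
  finally show ?thesis .
qed

lemma (in group_hom) bij_betw_complement_of_kernel:
  assumes L: "subgroup L G" and trivial: "kernel G H h \<inter> L = {\<one>}"
    and complement: "kernel G H h <#> L = carrier G" and surj: "h ` carrier G = carrier H"
  shows "bij_betw h L (carrier H)"
proof -
  interpret L: group_hom "G\<lparr>carrier := L\<rparr>" H h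
    using induced_group_hom'[OF L] .
  have LG: "L \<subseteq> carrier G"
    using L by (rule subgroup.subset)
  have "kernel (G\<lparr>carrier := L\<rparr>) H h = {\<one>}"
    using trivial LG by (auto simp: kernel_def)
  then have "inj_on h L"
    using L.inj_iff_trivial_ker by simp
  moreover have "h ` carrier G = h ` L"
  proof
    have "h (k \<otimes> l) \<in> h ` L" if "k \<in> kernel G H h" "l \<in> L" for k l
      using that LG by (auto simp: kernel_def)
    then show "h ` carrier G \<subseteq> h ` L"
      unfolding complement[symmetric] set_mult_def by auto
  qed (use LG in auto)
  ultimately show ?thesis
    unfolding bij_betw_def using surj by simp
qed

lemma (in group_hom) subgroup_perfect_code_image:
  assumes surj: "h ` carrier G = carrier H" and M: "subgroup M G" and ker: "kernel G H h \<subseteq> M"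
    and perfect: "subgroup_perfect_code M G"
  shows "subgroup_perfect_code (h ` M) H"
proof -
  obtain S where S: "cayley_connection_set G S" and code: "perfect_code_in G S M"
    using perfect unfolding subgroup_perfect_code_def by blast
  have SG: "S \<subseteq> carrier G"
    using S unfolding cayley_connection_set_def by auto
  have disjoint: "S \<inter> M = {}"
    and unique: "\<And>x. x \<in> carrier G - M \<Longrightarrow> \<exists>!s. s \<in> S \<inter> (x <#\<^bsub>G\<^esub> M)"
    using code G.perfect_code_in_subgroup_iff[OF M S] by auto
  have hM: "subgroup (h ` M) H"
    using subgroup_img_is_subgroup[OF M] .
  have T: "cayley_connection_set H (h ` S)"
  proof -
    have "h ` S \<subseteq> carrier H"
      using SG by auto
    moreover have "h s \<noteq> \<one>\<^bsub>H\<^esub>" if "s \<in> S" for s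
    proof
      assume "h s = \<one>\<^bsub>H\<^esub>"
      with that SG ker have "s \<in> M"
        by (auto simp: kernel_def)
      with that disjoint show False
        by blast
    qed
    moreover have "inv\<^bsub>H\<^esub> (h s) \<in> h ` S" if "s \<in> S" for s
    proof -
      have "inv\<^bsub>H\<^esub> (h s) = h (inv s)"
        using that SG by auto
      moreover have "inv s \<in> S"
        using that S unfolding cayley_connection_set_def by blast
      ultimately show ?thesis
        by simp
    qed
    ultimately show ?thesis
      unfolding cayley_connection_set_def by auto
  qed
  have "perfect_code_in H (h ` S) (h ` M)"
    unfolding H.perfect_code_in_subgroup_iff[OF hM T]
  proof (intro conjI ballI)
    have "h s \<notin> h ` M" if "s \<in> S" for s
      using that disjoint SG hom_mem_image_iff[OF M ker] by blast
    then show "h ` S \<inter> h ` M = {}"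
      by blast
  next
    fix u assume u: "u \<in> carrier H - h ` M"
    obtain x where x: "x \<in> carrier G" "u = h x"
      using u surj by auto
    with u have "x \<notin> M"
      by auto
    then obtain s where s: "s \<in> S" "s \<in> x <#\<^bsub>G\<^esub> M"
      and s_unique: "\<And>s'. s' \<in> S \<Longrightarrow> s' \<in> x <#\<^bsub>G\<^esub> M \<Longrightarrow> s' = s"
      using unique x by blast
    note lcos = hom_mem_lcos_image_iff[OF M ker x(1)]
    show "\<exists>!t. t \<in> h ` S \<inter> (u <#\<^bsub>H\<^esub> h ` M)"
    proof
      show "h s \<in> h ` S \<inter> (u <#\<^bsub>H\<^esub> h ` M)"
        using s SG lcos x(2) by blast
      show "t = h s" if t: "t \<in> h ` S \<inter> (u <#\<^bsub>H\<^esub> h ` M)" for t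
      proof -
        obtain s' where s': "s' \<in> S" "t = h s'"
          using t by blast
        with t x(2) have "h s' \<in> h x <#\<^bsub>H\<^esub> h ` M"
          by simp
        then have "s' \<in> x <#\<^bsub>G\<^esub> M"
          using lcos s'(1) SG by blast
        then show ?thesis
          using s_unique s' by blast
      qed
    qed
  qed
  then show ?thesis
    unfolding subgroup_perfect_code_def using hM T by blast
qed

lemma (in group_hom) subgroup_perfect_code_of_image:
  assumes M: "subgroup M G" and ker: "kernel G H h \<subseteq> M"
    and L: "subgroup L G" and bij: "bij_betw h L (carrier H)"
    and perfect: "subgroup_perfect_code (h ` M) H"
  shows "subgroup_perfect_code M G"
proof -
  have hM: "subgroup (h ` M) H"
    using subgroup_img_is_subgroup[OF M] .
  obtain T where T: "cayley_connection_set H T" and code: "perfect_code_in H T (h ` M)"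
    using perfect unfolding subgroup_perfect_code_def by blast
  have disjoint: "T \<inter> h ` M = {}"
    and unique: "\<And>u. u \<in> carrier H - h ` M \<Longrightarrow> \<exists>!t. t \<in> T \<inter> (u <#\<^bsub>H\<^esub> h ` M)"
    using code H.perfect_code_in_subgroup_iff[OF hM T] by auto
  have LG: "L \<subseteq> carrier G"
    using L by (rule subgroup.subset)
  define S where "S = {l \<in> L. h l \<in> T}"
  have S: "cayley_connection_set G S"
    using T LG subgroup.m_inv_closed[OF L]
    unfolding cayley_connection_set_def S_def by auto
  have "perfect_code_in G S M"
    unfolding G.perfect_code_in_subgroup_iff[OF M S]
  proof (intro conjI ballI)
    show "S \<inter> M = {}"
      using disjoint unfolding S_def by auto
  next
    fix x assume x: "x \<in> carrier G - M"
    have "h x \<in> carrier H - h ` M"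
      using x hom_mem_image_iff[OF M ker] by auto
    then obtain t where t: "t \<in> T \<inter> (h x <#\<^bsub>H\<^esub> h ` M)"
      and t_unique: "\<And>t'. t' \<in> T \<inter> (h x <#\<^bsub>H\<^esub> h ` M) \<Longrightarrow> t' = t"
      using unique by blast
    obtain l where l: "l \<in> L" "t = h l"
      using t T bij unfolding cayley_connection_set_def bij_betw_def by blast
    note lcos = hom_mem_lcos_image_iff[OF M ker, of x]
    show "\<exists>!s. s \<in> S \<inter> (x <#\<^bsub>G\<^esub> M)"
    proof
      show "l \<in> S \<inter> (x <#\<^bsub>G\<^esub> M)"
        using t l x LG lcos unfolding S_def by auto
      show "s = l" if "s \<in> S \<inter> (x <#\<^bsub>G\<^esub> M)" for s
      proof -
        have "h s = h l"
          using that t_unique l x LG lcos unfolding S_def by auto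
        then show ?thesis
          using that l bij unfolding S_def bij_betw_def inj_on_def by auto
      qed
    qed
  qed
  then show ?thesis
    unfolding subgroup_perfect_code_def using M S by blast
qed

lemma (in normal) kernel_r_coset_hom_Mod: "kernel G (G Mod H) (\<lambda>a. H #> a) = H"
proof -
  have "H #> x = H \<longleftrightarrow> x \<in> H" if "x \<in> carrier G" for x
    using that coset_join1 coset_join2 subgroup_axioms by blast
  then show ?thesis
    unfolding kernel_def using subset by auto
qed

theorem theorem4p4:
  fixes G :: "('a, 'b) monoid_scheme" and M K :: "'a set"
  assumes "group G" and "finite (carrier G)"
    and "subgroup M G" and "K \<lhd> G" and "K \<subseteq> M"
    and "\<exists>L. subgroup L G \<and> K \<inter> L = {\<one>\<^bsub>G\<^esub>} \<and> K <#>\<^bsub>G\<^esub> L = carrier G"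
  shows "subgroup_perfect_code M G \<longleftrightarrow>
         subgroup_perfect_code ((\<lambda>m. K #>\<^bsub>G\<^esub> m) ` M) (G Mod K)"
proof -
  interpret K: normal K G by fact
  interpret quotient: group_hom G "G Mod K" "\<lambda>m. K #>\<^bsub>G\<^esub> m"
    using K.r_coset_hom_Mod K.factorgroup_is_group assms(1)
    by (simp add: group_hom_def group_hom_axioms_def)
  obtain L where L: "subgroup L G" "K \<inter> L = {\<one>\<^bsub>G\<^esub>}" "K <#>\<^bsub>G\<^esub> L = carrier G"
    using assms(6) by blast
  note ker = K.kernel_r_coset_hom_Mod
  have surj: "(\<lambda>m. K #>\<^bsub>G\<^esub> m) ` carrier G = carrier (G Mod K)"
    by (simp add: carrier_FactGroup)
  have bij: "bij_betw (\<lambda>m. K #>\<^bsub>G\<^esub> m) L (carrier (G Mod K))"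
    using quotient.bij_betw_complement_of_kernel[OF L(1)] L(2,3) surj by (simp add: ker)
  show ?thesis
    using quotient.subgroup_perfect_code_image[OF surj assms(3)]
      quotient.subgroup_perfect_code_of_image[OF assms(3) _ L(1) bij] assms(5)
    by (auto simp only: ker)
qed

end
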